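(* Let $T$ be a tree with at least two vertices. Then $$F(T)=\frac{1}{2}\sum_{v\in V(T)} F(T_v).$$
   Context: For a finite undirected graph $G=(V,E)$, a shelling of $G$ is a total ordering $\sigma(1),\ldots,\sigma(|E|)$ of $E$ such that for every $k$ the edges $\sigma(1),\ldots,\sigma(k)$ form a connected subgraph; $F(G)$ is the number of shellings of $G$. For a vertex $v$ of a tree $T$, $T_v$ denotes $T$ rooted at $v$, a shelling of $T_v$ is a shelling $\sigma$ of $T$ whose first edge $\sigma(1)$ is incident to $v$, and $F(T_v)$ is the number of shellings of $T_v$. *)

theory Defs
  imports Complex_Main
begin

definition simple_graph :: "'a set \<Rightarrow> 'a set set \<Rightarrow> bool" where
  "simple_graph V E \<longleftrightarrow> finite V \<and>
     (\<forall>e\<in>E. \<exists>u v. e = {u, v} \<and> u \<noteq> v \<and> u \<in> V \<and> v \<in> V)"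

definition adj :: "'a set set \<Rightarrow> 'a \<Rightarrow> 'a \<Rightarrow> bool" where
  "adj E u v \<longleftrightarrow> u \<noteq> v \<and> {u, v} \<in> E"

definition connected_graph :: "'a set \<Rightarrow> 'a set set \<Rightarrow> bool" where
  "connected_graph V E \<longleftrightarrow> V \<noteq> {} \<and> (\<forall>u\<in>V. \<forall>v\<in>V. (adj E)\<^sup>*\<^sup>* u v)"

definition is_cycle :: "'a set set \<Rightarrow> 'a list \<Rightarrow> bool" where
  "is_cycle E xs \<longleftrightarrow> length xs \<ge> 3 \<and> distinct xs \<and>
     (\<forall>i. Suc i < length xs \<longrightarrow> adj E (xs ! i) (xs ! Suc i)) \<and>
     adj E (last xs) (hd xs)"

definition is_tree :: "'a set \<Rightarrow> 'a set set \<Rightarrow> bool" where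
  "is_tree V E \<longleftrightarrow> simple_graph V E \<and> connected_graph V E \<and> (\<nexists>xs. is_cycle E xs)"

definition shelling :: "'a set set \<Rightarrow> 'a set list \<Rightarrow> bool" where
  "shelling E \<sigma> \<longleftrightarrow> distinct \<sigma> \<and> set \<sigma> = E \<and>
     (\<forall>k\<in>{1..length \<sigma>}. connected_graph (\<Union> (set (take k \<sigma>))) (set (take k \<sigma>)))"

definition num_shellings :: "'a set set \<Rightarrow> nat" where
  "num_shellings E = card {\<sigma>. shelling E \<sigma>}"

text \<open>Shellings of the rooted tree T_v: first edge incident to v.\<close>
definition num_rooted_shellings :: "'a set set \<Rightarrow> 'a \<Rightarrow> nat" where
  "num_rooted_shellings E v = card {\<sigma>. shelling E \<sigma> \<and> \<sigma> \<noteq> [] \<and> v \<in> hd \<sigma>}"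

end

theory Submission
  imports Defs
begin

text \<open>Double counting: every shelling of a nonempty edge set starts with an edge, and that
  edge has exactly two endpoints, so each shelling is a rooted shelling for exactly two
  vertices. Hence the identity holds for every simple graph with at least one edge; a tree
  with two vertices is connected and therefore has an edge.\<close>

lemma simple_graph_finite_edges:
  assumes "simple_graph V E"
  shows "finite E"
proof -
  have "E \<subseteq> Pow V"
  proof
    fix e
    assume "e \<in> E"
    then obtain u w where "e = {u, w}" "u \<in> V" "w \<in> V"
      using assms unfolding simple_graph_def by meson
    then show "e \<in> Pow V"
      by simp
  qed
  moreover have "finite V"
    using assms by (simp add: simple_graph_def)
  ultimately show ?thesis
    by (meson finite_Pow_iff finite_subset)
qed

lemma simple_graph_card_endpoints:
  assumes "simple_graph V E" and "e \<in> E"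
  shows "card {v \<in> V. v \<in> e} = 2"
proof -
  obtain u w where "e = {u, w}" "u \<noteq> w" "u \<in> V" "w \<in> V"
    using assms unfolding simple_graph_def by meson
  then have "{v \<in> V. v \<in> e} = {u, w}"
    by auto
  with \<open>u \<noteq> w\<close> show ?thesis
    by simp
qed

lemma connected_graph_edges_nonempty:
  assumes "connected_graph V E" and "card V \<ge> 2"
  shows "E \<noteq> {}"
proof
  assume "E = {}"
  obtain u w where "u \<in> V" "w \<in> V" "u \<noteq> w"
    using assms(2) card_le_Suc0_iff_eq[of V] by (fastforce dest: card_ge_0_finite)
  then have "(adj E)\<^sup>*\<^sup>* u w"
    using assms(1) by (simp add: connected_graph_def)
  then have "u = w"
    using \<open>E = {}\<close> by (induction rule: converse_rtranclp_induct) (auto simp: adj_def)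
  with \<open>u \<noteq> w\<close> show False ..
qed

lemma finite_shellings:
  assumes "finite E"
  shows "finite {\<sigma>. shelling E \<sigma>}"
proof (rule finite_subset)
  show "{\<sigma>. shelling E \<sigma>} \<subseteq> {xs. set xs \<subseteq> E \<and> length xs \<le> card E}"
    unfolding shelling_def by (auto dest: distinct_card)
  show "finite {xs. set xs \<subseteq> E \<and> length xs \<le> card E}"
    using assms by (rule finite_lists_length_le)
qed

lemma shelling_hd_in_edges:
  assumes "shelling E \<sigma>" and "E \<noteq> {}"
  shows "\<sigma> \<noteq> []" and "hd \<sigma> \<in> E"
  using assms hd_in_set[of \<sigma>] by (auto simp: shelling_def)

lemma num_rooted_shellings_eq_card:
  assumes "E \<noteq> {}"
  shows "num_rooted_shellings E v = card {\<sigma> \<in> {\<sigma>. shelling E \<sigma>}. v \<in> hd \<sigma>}"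
proof -
  have "{\<sigma>. shelling E \<sigma> \<and> \<sigma> \<noteq> [] \<and> v \<in> hd \<sigma>} = {\<sigma> \<in> {\<sigma>. shelling E \<sigma>}. v \<in> hd \<sigma>}"
    using shelling_hd_in_edges(1)[OF _ assms] by blast
  then show ?thesis
    by (simp add: num_rooted_shellings_def)
qed

lemma sum_num_rooted_shellings:
  assumes "simple_graph V E" and "E \<noteq> {}"
  shows "(\<Sum>v\<in>V. num_rooted_shellings E v) = 2 * num_shellings E"
proof -
  have "finite V"
    using assms(1) by (simp add: simple_graph_def)
  moreover have "finite {\<sigma>. shelling E \<sigma>}"
    using finite_shellings simple_graph_finite_edges assms(1) by blast
  moreover have "\<forall>\<sigma>\<in>{\<sigma>. shelling E \<sigma>}. card {v \<in> V. v \<in> hd \<sigma>} = 2"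
    using simple_graph_card_endpoints[OF assms(1)] shelling_hd_in_edges(2)[OF _ assms(2)] by simp
  ultimately show ?thesis
    unfolding num_rooted_shellings_eq_card[OF assms(2)] num_shellings_def
    by (rule sum_multicount)
qed

theorem proposition3p6:
  fixes V :: "'a set" and E :: "'a set set"
  assumes "is_tree V E" and "card V \<ge> 2"
  shows "real (num_shellings E) = (1/2) * (\<Sum>v\<in>V. real (num_rooted_shellings E v))"
proof -
  have "simple_graph V E" and "connected_graph V E"
    using assms(1) by (simp_all add: is_tree_def)
  then have "(\<Sum>v\<in>V. num_rooted_shellings E v) = 2 * num_shellings E"
    using sum_num_rooted_shellings connected_graph_edges_nonempty assms(2) by blast
  then have "real (\<Sum>v\<in>V. num_rooted_shellings E v) = 2 * real (num_shellings E)"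
    by simp
  then show ?thesis
    by simp
qed

end
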